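(* Let $T\subset V$ be an open cone with basepoint $b\in T$, and let $x\in\partial T\setminus[0]_T$. If a sequence $(x_n)$ in $T$ converges to $x$ in the usual topology of $V$, then it converges in the reverse Funk sense to $r_{T,x}$, i.e. $RF_T(\cdot,x_n)-RF_T(b,x_n)\to r_{T,x}$ pointwise on $T$.
   Context: $V$ is a finite-dimensional real vector space. An open cone is a nonempty open convex set $T\subset V$ with $\lambda T\subseteq T$ for all $\lambda>0$ and $0\notin T$; $\partial T$ its boundary. Write $x\le_T y$ iff $y-x\in\overline T$, $[0]_T:=\overline T\cap(-\overline T)$. $M_T(y/x):=\inf\{\lambda>0:y\le_T\lambda x\}$ for $y\in V,x\in T$, $F_T(y,x):=\log M_T(y/x)$, and the (extended) reverse Funk function $RF_T(x,y):=\log M_T(y/x)$ for $x\in T$, $y\in V$. For $p\in\partial T\setminus[0]_T$, $r_{T,p}(x):=RF_T(x,p)-RF_T(b,p)$, $x\in T$. *)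

theory Defs
  imports "HOL-Analysis.Analysis"
begin

definition open_cone :: "'a::euclidean_space set \<Rightarrow> bool" where
  "open_cone T \<longleftrightarrow> T \<noteq> {} \<and> open T \<and> convex T \<and>
     (\<forall>c::real. c > 0 \<longrightarrow> (\<forall>x\<in>T. c *\<^sub>R x \<in> T)) \<and> 0 \<notin> T"

definition cone_le :: "'a::euclidean_space set \<Rightarrow> 'a \<Rightarrow> 'a \<Rightarrow> bool" where
  "cone_le T x y \<longleftrightarrow> y - x \<in> closure T"

definition zero_class :: "'a::euclidean_space set \<Rightarrow> 'a set" where
  "zero_class T = closure T \<inter> (\<lambda>v. - v) ` closure T"

definition M_T :: "'a::euclidean_space set \<Rightarrow> 'a \<Rightarrow> 'a \<Rightarrow> real" where
  "M_T T y x = Inf {c::real. c > 0 \<and> cone_le T y (c *\<^sub>R x)}"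

definition RF_T :: "'a::euclidean_space set \<Rightarrow> 'a \<Rightarrow> 'a \<Rightarrow> real" where
  "RF_T T x y = ln (M_T T y x)"

definition r_T :: "'a::euclidean_space set \<Rightarrow> 'a \<Rightarrow> 'a \<Rightarrow> 'a \<Rightarrow> real" where
  "r_T T b p x = RF_T T x p - RF_T T b p"

end

theory Submission
  imports Defs
begin

text \<open>
  Fix \<open>y \<in> T\<close> and a ball \<open>ball y e \<subseteq> T\<close>. Then \<open>t y - w \<in> T\<close> whenever \<open>\<parallel>w\<parallel> < t e\<close>, so
  raising an admissible scalar \<open>c\<close> for \<open>z\<close> by \<open>\<parallel>w\<parallel>/e\<close> gives an admissible scalar for \<open>z + w\<close>:
  \<open>z \<mapsto> M\<^sub>T(z/y)\<close> is \<open>1/e\<close>-Lipschitz on all of \<open>V\<close>. Moreover \<open>M\<^sub>T(x/y) = 0\<close> would make every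
  \<open>c y - x\<close> with \<open>c > 0\<close> lie in \<open>closure T\<close>, hence \<open>-x \<in> closure T\<close>; for
  \<open>x \<in> closure T - [0]\<^sub>T\<close> this is excluded, so \<open>M\<^sub>T(x/y) > 0\<close> and \<open>RF\<^sub>T(y,\<cdot>) = ln M\<^sub>T(\<cdot>/y)\<close>
  is continuous at \<open>x\<close>.
\<close>

lemma open_cone_add:
  assumes "open_cone T" "u \<in> T" "v \<in> T"
  shows "u + v \<in> T"
proof -
  have "convex T" and scale: "\<And>c x. c > 0 \<Longrightarrow> x \<in> T \<Longrightarrow> c *\<^sub>R x \<in> T"
    using assms(1) unfolding open_cone_def by auto
  then have "(1/2::real) *\<^sub>R u + (1/2::real) *\<^sub>R v \<in> T"
    using assms(2,3) by (simp add: convex_def)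
  then have "(2::real) *\<^sub>R ((1/2::real) *\<^sub>R u + (1/2::real) *\<^sub>R v) \<in> T"
    by (rule scale[rotated]) simp
  then show ?thesis
    by (simp add: scaleR_add_right)
qed

lemma open_cone_closure_add:
  assumes "open_cone T" "u \<in> closure T" "v \<in> T"
  shows "u + v \<in> closure T"
proof -
  have "(+) v ` T \<subseteq> T"
    using open_cone_add[OF assms(1) assms(3)] by blast
  then have "(+) v ` closure T \<subseteq> closure T"
    by (metis closure_mono closure_translation)
  then show ?thesis
    using assms(2) by (auto simp: add.commute)
qed

lemma cone_le_scaleR_mono:
  assumes "open_cone T" "y \<in> T" "cone_le T z (c *\<^sub>R y)" "c < d"
  shows "cone_le T z (d *\<^sub>R y)"
proof -
  have "(d - c) *\<^sub>R y \<in> T"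
    using assms(1,2,4) unfolding open_cone_def by auto
  from open_cone_closure_add[OF assms(1) assms(3)[unfolded cone_le_def] this]
  show ?thesis
    unfolding cone_le_def by (simp add: algebra_simps)
qed

lemma open_cone_scaled_ball:
  assumes "open_cone T" "ball y e \<subseteq> T" "t > 0" "norm w < t * e"
  shows "t *\<^sub>R y - w \<in> T"
proof -
  have "norm (w /\<^sub>R t) < e"
    using assms(3,4) by (simp add: field_simps)
  then have "y - w /\<^sub>R t \<in> T"
    using assms(2) by (auto simp: dist_norm)
  then have "t *\<^sub>R (y - w /\<^sub>R t) \<in> T"
    using assms(1,3) unfolding open_cone_def by auto
  then show ?thesis
    using assms(3) by (simp add: scaleR_diff_right)
qed

lemma M_T_set_nonempty:
  assumes "open_cone T" "e > 0" "ball y e \<subseteq> T"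
  shows "{c. c > 0 \<and> cone_le T z (c *\<^sub>R y)} \<noteq> {}"
proof -
  define c where "c = norm z / e + 1"
  have "c > 0" and "norm z < c * e"
    using assms(2) by (auto simp: c_def field_simps intro: add_pos_nonneg)
  then have "c *\<^sub>R y - z \<in> closure T"
    using open_cone_scaled_ball[OF assms(1,3)] closure_subset by blast
  with \<open>c > 0\<close> show ?thesis
    unfolding cone_le_def by blast
qed

lemma M_T_add_le:
  assumes T: "open_cone T" and e: "e > 0" "ball y e \<subseteq> T"
  shows "M_T T (z + w) y \<le> M_T T z y + norm w / e"
proof (rule dense_ge)
  fix r assume "M_T T z y + norm w / e < r"
  define t where "t = r - M_T T z y"
  have "norm w < t * e"
    using \<open>M_T T z y + norm w / e < r\<close> e(1) by (simp add: t_def field_simps)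
  then have "t > 0"
    using e(1) by (meson norm_ge_zero le_less_trans zero_less_mult_pos2)
  have "M_T T (z + w) y \<le> c + t" if "c > 0" "cone_le T z (c *\<^sub>R y)" for c
  proof -
    have "t *\<^sub>R y - w \<in> T"
      using open_cone_scaled_ball[OF T e(2) \<open>t > 0\<close> \<open>norm w < t * e\<close>] .
    from open_cone_closure_add[OF T that(2)[unfolded cone_le_def] this]
    have "cone_le T (z + w) ((c + t) *\<^sub>R y)"
      unfolding cone_le_def by (simp add: algebra_simps)
    then show ?thesis
      unfolding M_T_def using \<open>c > 0\<close> \<open>t > 0\<close>
      by (intro cInf_lower) (auto intro: bdd_belowI[of _ 0])
  qed
  then have "M_T T (z + w) y - t \<le> M_T T z y"
    unfolding M_T_def[of T z] using M_T_set_nonempty[OF T e]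
    by (intro cInf_greatest) (auto simp: algebra_simps)
  then show "M_T T (z + w) y \<le> r"
    by (simp add: t_def)
qed

lemma M_T_lipschitz:
  assumes "open_cone T" "e > 0" "ball y e \<subseteq> T"
  shows "(1 / e)-lipschitz_on UNIV (\<lambda>z. M_T T z y)"
proof (rule lipschitz_onI)
  fix z z' :: 'a
  have "M_T T z y \<le> M_T T z' y + norm (z - z') / e"
    using M_T_add_le[OF assms, of z' "z - z'"] by simp
  moreover have "M_T T z' y \<le> M_T T z y + norm (z - z') / e"
    using M_T_add_le[OF assms, of z "z' - z"] by (simp add: norm_minus_commute)
  ultimately show "dist (M_T T z y) (M_T T z' y) \<le> 1 / e * dist z z'"
    by (simp add: dist_real_def dist_norm abs_le_iff)
qed (use assms(2) in simp)

lemma isCont_M_T: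
  assumes "open_cone T" "y \<in> T"
  shows "isCont (\<lambda>z. M_T T z y) x"
proof -
  obtain e where "e > 0" "ball y e \<subseteq> T"
    using assms unfolding open_cone_def by (meson open_contains_ball)
  from lipschitz_on_continuous_on[OF M_T_lipschitz[OF assms(1) this]]
  show ?thesis
    by (simp add: continuous_on_eq_continuous_at)
qed

lemma M_T_pos:
  assumes T: "open_cone T" and "y \<in> T" and "- x \<notin> closure T"
  shows "M_T T x y > 0"
proof (rule ccontr)
  assume "\<not> M_T T x y > 0"
  obtain e where e: "e > 0" "ball y e \<subseteq> T"
    using T \<open>y \<in> T\<close> unfolding open_cone_def by (meson open_contains_ball)
  have "c *\<^sub>R y - x \<in> closure T" if "c > 0" for c
  proof -
    have "Inf {c. c > 0 \<and> cone_le T x (c *\<^sub>R y)} < c"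
      using \<open>\<not> M_T T x y > 0\<close> \<open>c > 0\<close> unfolding M_T_def by simp
    then obtain c' where "cone_le T x (c' *\<^sub>R y)" "c' < c"
      using cInf_lessD[OF M_T_set_nonempty[OF T e]] by blast
    then show ?thesis
      using cone_le_scaleR_mono[OF T \<open>y \<in> T\<close>] unfolding cone_le_def by blast
  qed
  then have "\<forall>n. inverse (real (Suc n)) *\<^sub>R y - x \<in> closure T"
    by simp
  moreover have "(\<lambda>n. inverse (real (Suc n)) *\<^sub>R y - x) \<longlonglongrightarrow> 0 *\<^sub>R y - x"
    by (intro tendsto_intros LIMSEQ_inverse_real_of_nat)
  ultimately have "- x \<in> closure T"
    using closed_sequentially[OF closed_closure] by fastforce
  with assms(3) show False ..
qed

theorem mainTheorem15:
  fixes T :: "'a::euclidean_space set" and b x :: 'a and xs :: "nat \<Rightarrow> 'a"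
  assumes "open_cone T"
    and "b \<in> T"
    and "x \<in> frontier T" and "x \<notin> zero_class T"
    and "\<And>n. xs n \<in> T"
    and "xs \<longlonglongrightarrow> x"
  shows "\<forall>y\<in>T. (\<lambda>n. RF_T T y (xs n) - RF_T T b (xs n)) \<longlonglongrightarrow> r_T T b x y"
proof
  fix y assume "y \<in> T"
  have "- x \<notin> closure T"
    using assms(3,4) unfolding zero_class_def frontier_def by force
  have "(\<lambda>n. M_T T (xs n) v) \<longlonglongrightarrow> M_T T x v" and "M_T T x v \<noteq> 0" if "v \<in> T" for v
    using isCont_tendsto_compose[OF isCont_M_T[OF assms(1) that] assms(6)]
      M_T_pos[OF assms(1) that \<open>- x \<notin> closure T\<close>] by auto
  then show "(\<lambda>n. RF_T T y (xs n) - RF_T T b (xs n)) \<longlonglongrightarrow> r_T T b x y"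
    unfolding r_T_def RF_T_def using \<open>y \<in> T\<close> assms(2) by (intro tendsto_intros) auto
qed

end
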